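(* Assume $|J|=1$, all travel time functions $\tau_{i,p}$ are continuous and all externality functions $g_{i,p}$ are constant. Then every feasible budget is strictly implementable. More specifically, for every \[ \lambda>\max_{i\in I}\frac{\overline{\tau_i}-\underline{\tau_i}}{g_i^\circ-g_i^*}, \] every Wardrop equilibrium $x\in\mathrm{WE}(\lambda)$ satisfies $G(x)=\min_{y\in\mathcal F}G(y)$ (i.e., respects the minimal feasible budget), where $\overline{\tau_i}=\sup_{x\in\mathcal F,p\in\mathcal P_i}\tau_{i,p}(x)$, $\underline{\tau_i}=\inf_{x\in\mathcal F,p\in\mathcal P_i}\tau_{i,p}(x)$, $g_i^*=\min_{p\in\mathcal P_i}g_{i,p}$, and $g_i^\circ=\inf\{g_{i,p}: p\in\mathcal P_i, g_{i,p}>g_i^*\}$ (with $g_i^\circ=\infty$ if all paths in $\mathcal P_i$ have the same externality).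
   Context: Let $G=(V,E)$ be a directed graph and $I$ a finite set of commodities; commodity $i$ has source $s_i$, sink $t_i$, demand $d_i>0$, and $\mathcal P_i$ is its set of simple $s_i$–$t_i$ paths; $\mathcal P=\{(i,p)\}$. A flow $x\in\mathbb{R}^{\mathcal P}_{\ge0}$ is feasible if $\sum_{p\in\mathcal P_i}x_{i,p}=d_i$ for all $i$; $\mathcal F$ denotes the feasible flows. There is a single externality class with constant externality factors $g_{i,p}\ge0$ and total externality $G(x)=\sum_{(i,p)}g_{i,p}x_{i,p}$. Travel times $\tau_{i,p}:\mathcal F\to\mathbb{R}$. For $\lambda\ge0$, $c^\lambda_{i,p}(x)=\tau_{i,p}(x)+\lambda g_{i,p}$; $x\in\mathrm{WE}(\lambda)$ means $x\in\mathcal F$ and $x_{i,p}>0$ implies $c^\lambda_{i,p}(x)\le c^\lambda_{i,q}(x)$ for all $q\in\mathcal P_i$. A budget $B\ge0$ is feasible if some $x\in\mathcal F$ has $G(x)\le B$; it is strictly implementable if there is $\lambda>0$ with $\mathrm{WE}(\lambda)\ne\emptyset$ such that every $u\in\mathrm{WE}(\lambda)$ satisfies $G(u)\le B$. *)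

theory Defs
  imports "HOL-Analysis.Analysis"
begin

definition simple_path :: "('v \<times> 'v) set \<Rightarrow> 'v \<Rightarrow> 'v \<Rightarrow> 'v list \<Rightarrow> bool" where
  "simple_path E s t p \<longleftrightarrow> p \<noteq> [] \<and> hd p = s \<and> last p = t \<and> distinct p \<and>
     (\<forall>k. Suc k < length p \<longrightarrow> (p ! k, p ! Suc k) \<in> E)"

definition paths :: "('v \<times> 'v) set \<Rightarrow> 'v \<Rightarrow> 'v \<Rightarrow> 'v list set" where
  "paths E s t = {p. simple_path E s t p}"

definition allpaths :: "('v \<times> 'v) set \<Rightarrow> 'i set \<Rightarrow> ('i \<Rightarrow> 'v) \<Rightarrow> ('i \<Rightarrow> 'v) \<Rightarrow> ('i \<times> 'v list) set" where
  "allpaths E I s t = {(i, p). i \<in> I \<and> p \<in> paths E (s i) (t i)}"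

definition feasible_flows ::
  "('v \<times> 'v) set \<Rightarrow> 'i set \<Rightarrow> ('i \<Rightarrow> 'v) \<Rightarrow> ('i \<Rightarrow> 'v) \<Rightarrow> ('i \<Rightarrow> real) \<Rightarrow> ('i \<times> 'v list \<Rightarrow> real) set" where
  "feasible_flows E I s t d = {x.
     (\<forall>q \<in> allpaths E I s t. 0 \<le> x q) \<and> (\<forall>q. q \<notin> allpaths E I s t \<longrightarrow> x q = 0) \<and>
     (\<forall>i \<in> I. (\<Sum>p \<in> paths E (s i) (t i). x (i, p)) = d i)}"

definition total_ext ::
  "('v \<times> 'v) set \<Rightarrow> 'i set \<Rightarrow> ('i \<Rightarrow> 'v) \<Rightarrow> ('i \<Rightarrow> 'v) \<Rightarrow> ('i \<Rightarrow> 'v list \<Rightarrow> real) \<Rightarrow> ('i \<times> 'v list \<Rightarrow> real) \<Rightarrow> real" where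
  "total_ext E I s t g x = (\<Sum>(i, p) \<in> allpaths E I s t. g i p * x (i, p))"

definition WE ::
  "('v \<times> 'v) set \<Rightarrow> 'i set \<Rightarrow> ('i \<Rightarrow> 'v) \<Rightarrow> ('i \<Rightarrow> 'v) \<Rightarrow> ('i \<Rightarrow> real) \<Rightarrow>
   ('i \<Rightarrow> 'v list \<Rightarrow> ('i \<times> 'v list \<Rightarrow> real) \<Rightarrow> real) \<Rightarrow> ('i \<Rightarrow> 'v list \<Rightarrow> real) \<Rightarrow> real \<Rightarrow>
   ('i \<times> 'v list \<Rightarrow> real) set" where
  "WE E I s t d tau g lam = {x. x \<in> feasible_flows E I s t d \<and>
     (\<forall>i \<in> I. \<forall>p \<in> paths E (s i) (t i). x (i, p) > 0 \<longrightarrow>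
        (\<forall>q \<in> paths E (s i) (t i). tau i p x + lam * g i p \<le> tau i q x + lam * g i q))}"

definition feasible_budget where
  "feasible_budget E I s t d g B \<longleftrightarrow> 0 \<le> B \<and> (\<exists>x \<in> feasible_flows E I s t d. total_ext E I s t g x \<le> B)"

definition strictly_implementable where
  "strictly_implementable E I s t d tau g B \<longleftrightarrow>
     (\<exists>lam > 0. WE E I s t d tau g lam \<noteq> {} \<and>
        (\<forall>u \<in> WE E I s t d tau g lam. total_ext E I s t g u \<le> B))"

definition tau_sup where
  "tau_sup E I s t d tau i = Sup {tau i p x | p x. p \<in> paths E (s i) (t i) \<and> x \<in> feasible_flows E I s t d}"
definition tau_inf where
  "tau_inf E I s t d tau i = Inf {tau i p x | p x. p \<in> paths E (s i) (t i) \<and> x \<in> feasible_flows E I s t d}"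
definition g_star where
  "g_star E s t g i = Min (g i ` paths E (s i) (t i))"
definition g_circ where
  "g_circ E s t g i = Inf {g i p | p. p \<in> paths E (s i) (t i) \<and> g i p > g_star E s t g i}"

text \<open>The ratio (tau_sup - tau_inf)/(g_circ - g_star); it is 0 when g_circ = infinity,
  i.e. when all paths of commodity i have the same externality.\<close>
definition threshold_ratio where
  "threshold_ratio E I s t d tau g i =
     (if \<forall>p \<in> paths E (s i) (t i). g i p = g_star E s t g i then 0
      else (tau_sup E I s t d tau i - tau_inf E I s t d tau i) / (g_circ E s t g i - g_star E s t g i))"

end

theory Submission
  imports Defs
begin

text \<open>Existence of equilibria: Nash's map, which shifts the demand of each commodity towards
  the routes that are cheaper than the commodity's mean cost, is a continuous self-map of the set
  of feasible flows, and its fixed points are Wardrop equilibria. The feasible flows form a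
  retract of a cube, so Brouwer's theorem provides a fixed point. The number of coordinates is a
  term and not a type, so Brouwer's theorem of HOL-Analysis, which is stated for types of class
  \<open>euclidean_space\<close>, does not apply; its Kuhn-labelling proof is redone for cubes in
  \<open>nat \<Rightarrow> real\<close>.

  Minimal externality: let \<open>\<lambda>\<close> exceed the threshold and let \<open>x\<close> be an equilibrium. If
  commodity \<open>i\<close> used a route \<open>p\<close> with \<open>g\<^sub>p > g\<^sup>*\<^sub>i\<close>, then switching to a route of
  externality \<open>g\<^sup>*\<^sub>i\<close> would save at least \<open>\<lambda> (g\<^sup>\<circ>\<^sub>i - g\<^sup>*\<^sub>i)\<close> in tolls, while it raises the
  travel time by at most \<open>sup \<tau>\<^sub>i - inf \<tau>\<^sub>i < \<lambda> (g\<^sup>\<circ>\<^sub>i - g\<^sup>*\<^sub>i)\<close>. So all demand travels on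
  routes of minimal externality, and \<open>G x = (\<Sum>i. d\<^sub>i g\<^sup>*\<^sub>i)\<close>, which is a lower bound for \<open>G\<close> on
  all feasible flows.\<close>

section \<open>Brouwer's fixed point theorem for cubes in \<open>nat \<Rightarrow> real\<close>\<close>

lemma continuous_on_coordinate [continuous_intros]: "continuous_on S (\<lambda>x. x i)"
  by (rule continuous_on_subset[OF continuous_on_product_coordinates]) simp

definition cube :: "nat \<Rightarrow> (nat \<Rightarrow> real) set" where
  "cube n = {x. (\<forall>i<n. 0 \<le> x i \<and> x i \<le> 1) \<and> (\<forall>i. n \<le> i \<longrightarrow> x i = 0)}"

lemma cube_memI: "(\<And>i. i < n \<Longrightarrow> 0 \<le> x i \<and> x i \<le> 1) \<Longrightarrow> (\<And>i. n \<le> i \<Longrightarrow> x i = 0) \<Longrightarrow> x \<in> cube n"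
  unfolding cube_def by auto

lemma compact_cube: "compact (cube n)"
proof -
  have "cube n = Pi\<^sub>E UNIV (\<lambda>i. if i < n then {0..1} else {0})"
    unfolding cube_def PiE_def Pi_def extensional_def by (auto simp: not_less)
  moreover have "compactin (product_topology (\<lambda>i. euclidean) UNIV)
      (Pi\<^sub>E UNIV (\<lambda>i. if i < n then {0..1::real} else {0}))"
    by (subst compactin_PiE) (auto simp: compactin_euclidean_iff)
  ultimately show ?thesis
    by (simp add: euclidean_product_topology compactin_euclidean_iff)
qed

lemma dist_fun_ge_coordinate:
  fixes x y :: "nat \<Rightarrow> real"
  shows "(1/2) ^ to_nat i * min (dist (x i) (y i)) 1 \<le> dist x y"
proof -
  have "summable (\<lambda>n. (1/2::real) ^ n * min (dist (x (from_nat n)) (y (from_nat n))) 1)"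
    by (rule summable_comparison_test'[of "\<lambda>n. (1/2) ^ n"]) (auto simp: summable_geometric_iff)
  from sum_le_suminf[OF this, of "{to_nat i}"] show ?thesis
    unfolding dist_fun_def by simp
qed

lemma dist_fun_le_coordinatewise:
  fixes x y :: "nat \<Rightarrow> real"
  assumes "\<And>i. dist (x i) (y i) \<le> e"
  shows "dist x y \<le> 2 * e"
proof -
  have "0 \<le> e" using assms[of 0] zero_le_dist order_trans by blast
  have "summable (\<lambda>n. (1/2::real) ^ n * min (dist (x (from_nat n)) (y (from_nat n))) 1)"
    by (rule summable_comparison_test'[of "\<lambda>n. (1/2) ^ n"]) (auto simp: summable_geometric_iff)
  moreover have "summable (\<lambda>n. (1/2::real) ^ n * e)"
    by (intro summable_mult2) (auto simp: summable_geometric_iff)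
  ultimately have "dist x y \<le> (\<Sum>n. (1/2::real) ^ n * e)"
    unfolding dist_fun_def by (intro suminf_le) (auto intro!: mult_left_mono min.coboundedI1 assms)
  also have "\<dots> = 2 * e"
    using suminf_geometric[of "1/2::real"] by (simp add: suminf_mult2[symmetric])
  finally show ?thesis .
qed

lemma cube_uniformly_continuous_coordinates:
  fixes f :: "(nat \<Rightarrow> real) \<Rightarrow> nat \<Rightarrow> real"
  assumes cont: "continuous_on (cube n) f" and "c > 0"
  obtains e where "e > 0"
    and "\<And>x y i. x \<in> cube n \<Longrightarrow> y \<in> cube n \<Longrightarrow> (\<And>j. j < n \<Longrightarrow> \<bar>x j - y j\<bar> \<le> e) \<Longrightarrow>
           i < n \<Longrightarrow> \<bar>f x i - f y i\<bar> < c"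
proof -
  define K where "K = Max (to_nat ` {..<n})"
  define eps where "eps = (1/2::real) ^ K * min c 1"
  have "eps > 0" using \<open>c > 0\<close> by (simp add: eps_def)
  then obtain del where "del > 0"
    and del: "\<And>x y. x \<in> cube n \<Longrightarrow> y \<in> cube n \<Longrightarrow> dist x y < del \<Longrightarrow> dist (f x) (f y) < eps"
    using compact_uniformly_continuous[OF cont compact_cube]
    unfolding uniformly_continuous_on_def by metis
  show ?thesis
  proof
    show "del / 4 > 0" using \<open>del > 0\<close> by simp
    fix x y i
    assume x: "x \<in> cube n" and y: "y \<in> cube n" and i: "i < n"
      and close: "\<And>j. j < n \<Longrightarrow> \<bar>x j - y j\<bar> \<le> del / 4"
    have "dist (x j) (y j) \<le> del / 4" for j
      using close[of j] x y \<open>del > 0\<close> by (cases "j < n") (auto simp: cube_def dist_real_def)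
    then have "dist x y \<le> 2 * (del / 4)"
      by (rule dist_fun_le_coordinatewise)
    then have "dist x y < del"
      using \<open>del > 0\<close> by simp
    then have "(1/2) ^ to_nat i * min (dist (f x i) (f y i)) 1 < eps"
      using del[OF x y] dist_fun_ge_coordinate[of i "f x" "f y"] by linarith
    moreover have "(1/2::real) ^ K \<le> (1/2) ^ to_nat i"
      using i unfolding K_def by (intro power_decreasing Max_ge) auto
    ultimately have "(1/2) ^ K * min (dist (f x i) (f y i)) 1 < (1/2) ^ K * min c 1"
      unfolding eps_def by (smt (verit) mult_right_mono min.cobounded2 zero_le_dist)
    then show "\<bar>f x i - f y i\<bar> < c"
      by (simp add: dist_real_def min_def split: if_splits)
  qed
qed

lemma cube_approximate_fixpoint:
  fixes f :: "(nat \<Rightarrow> real) \<Rightarrow> nat \<Rightarrow> real"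
  assumes cont: "continuous_on (cube n) f" and maps: "f \<in> cube n \<rightarrow> cube n" and "\<epsilon> > 0"
  obtains z where "z \<in> cube n" "\<And>i. i < n \<Longrightarrow> \<bar>f z i - z i\<bar> < \<epsilon>"
proof -
  have inside: "0 \<le> x i \<and> x i \<le> 1" if "x \<in> cube n" "i < n" for x i
    using that by (simp add: cube_def)
  obtain label :: "(nat \<Rightarrow> real) \<Rightarrow> nat \<Rightarrow> nat" where label:
    "\<forall>x i. label x i \<le> 1"
    "\<forall>x i. x \<in> cube n \<and> i < n \<and> x i = 0 \<longrightarrow> label x i = 0"
    "\<forall>x i. x \<in> cube n \<and> i < n \<and> x i = 1 \<longrightarrow> label x i = 1"
    "\<forall>x i. x \<in> cube n \<and> i < n \<and> label x i = 0 \<longrightarrow> x i \<le> f x i"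
    "\<forall>x i. x \<in> cube n \<and> i < n \<and> label x i = 1 \<longrightarrow> f x i \<le> x i"
    using kuhn_labelling_lemma'[of "\<lambda>x. x \<in> cube n" f "\<lambda>i. i < n"] maps inside by blast
  \<comment> \<open>Different labels at \<open>x\<close> and \<open>y\<close> mean that \<open>f\<close> moves coordinate \<open>i\<close> in opposite directions there.\<close>
  have label_change: "\<bar>f x i - x i\<bar> \<le> \<bar>f y i - f x i\<bar> + \<bar>y i - x i\<bar>"
    if "x \<in> cube n" "y \<in> cube n" "i < n" "label x i \<noteq> label y i" for x y i
  proof -
    have "label x i = 0 \<or> label x i = 1" "label y i = 0 \<or> label y i = 1"
      using label(1) by (meson le_neq_implies_less less_one)+
    then show ?thesis using that label(4,5) by (smt (verit))
  qed
  define c where "c = \<epsilon> / 4"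
  have "c > 0" using \<open>\<epsilon> > 0\<close> by (simp add: c_def)
  then obtain e where "e > 0" and e: "\<And>x y i. x \<in> cube n \<Longrightarrow> y \<in> cube n \<Longrightarrow>
      (\<And>j. j < n \<Longrightarrow> \<bar>x j - y j\<bar> \<le> e) \<Longrightarrow> i < n \<Longrightarrow> \<bar>f x i - f y i\<bar> < c"
    using cube_uniformly_continuous_coordinates[OF cont] by metis
  obtain p :: nat where "p > 0" and mesh: "inverse (real p) < min e c"
    using ex_inverse_of_nat_less[of "min e c"] \<open>e > 0\<close> \<open>c > 0\<close> by auto
  define grid where "grid x = (\<lambda>j. if j < n then real (x j) / real p else 0)" for x :: "nat \<Rightarrow> nat"
  have grid_cube: "grid x \<in> cube n" if "\<forall>i<n. x i \<le> p" for x
    using that \<open>p > 0\<close> unfolding grid_def by (intro cube_memI) (auto simp: field_simps)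
  obtain q where q: "\<forall>i<n. q i < p"
    "\<forall>i<n. \<exists>r s. (\<forall>j<n. q j \<le> r j \<and> r j \<le> q j + 1) \<and> (\<forall>j<n. q j \<le> s j \<and> s j \<le> q j + 1)
       \<and> label (grid r) i \<noteq> label (grid s) i"
  proof (rule kuhn_lemma[OF \<open>p > 0\<close>, of n "\<lambda>x. label (grid x)"])
    show "\<forall>x. (\<forall>i<n. x i \<le> p) \<longrightarrow> (\<forall>i<n. label (grid x) i = 0 \<or> label (grid x) i = 1)"
      using label(1) by (meson le_neq_implies_less less_one)
    show "\<forall>x. (\<forall>i<n. x i \<le> p) \<longrightarrow> (\<forall>i<n. x i = 0 \<longrightarrow> label (grid x) i = 0)"
      using label(2) grid_cube by (auto simp: grid_def)
    show "\<forall>x. (\<forall>i<n. x i \<le> p) \<longrightarrow> (\<forall>i<n. x i = p \<longrightarrow> label (grid x) i = 1)"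
      using label(3) grid_cube \<open>p > 0\<close> by (auto simp: grid_def)
  qed
  have near: "\<bar>grid a j - grid b j\<bar> \<le> min e c"
    if "\<forall>j<n. q j \<le> a j \<and> a j \<le> q j + 1" "\<forall>j<n. q j \<le> b j \<and> b j \<le> q j + 1" for a b j
  proof (cases "j < n")
    case True
    then have "\<bar>real (a j) - real (b j)\<bar> \<le> 1" using that by force
    then have "inverse (real p) * \<bar>real (a j) - real (b j)\<bar> \<le> inverse (real p) * 1"
      by (intro mult_left_mono) simp_all
    then have "\<bar>real (a j) - real (b j)\<bar> / real p \<le> inverse (real p)"
      by (simp add: divide_inverse_commute)
    then show ?thesis
      using True mesh by (simp add: grid_def diff_divide_distrib[symmetric])
  qed (use \<open>e > 0\<close> \<open>c > 0\<close> in \<open>simp add: grid_def\<close>)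
  have q_self: "\<forall>j<n. q j \<le> q j \<and> q j \<le> q j + 1" by simp
  have "grid q \<in> cube n" using q(1) by (intro grid_cube) (auto intro: less_imp_le)
  moreover have "\<bar>f (grid q) i - grid q i\<bar> < \<epsilon>" if "i < n" for i
  proof -
    obtain r s where r: "\<forall>j<n. q j \<le> r j \<and> r j \<le> q j + 1" and s: "\<forall>j<n. q j \<le> s j \<and> s j \<le> q j + 1"
      and "label (grid r) i \<noteq> label (grid s) i"
      using q(2) \<open>i < n\<close> by blast
    have "grid r \<in> cube n" "grid s \<in> cube n"
      using r s q(1) by (auto intro!: grid_cube simp: Suc_le_eq less_Suc_eq_le intro: order.trans)
    have "\<bar>f (grid q) i - f (grid r) i\<bar> < c"
      using e[OF \<open>grid q \<in> cube n\<close> \<open>grid r \<in> cube n\<close> _ \<open>i < n\<close>] near[OF q_self r] by simp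
    moreover have "\<bar>f (grid s) i - f (grid r) i\<bar> < c"
      using e[OF \<open>grid s \<in> cube n\<close> \<open>grid r \<in> cube n\<close> _ \<open>i < n\<close>] near[OF s r] by simp
    moreover have "\<bar>f (grid r) i - grid r i\<bar> \<le> \<bar>f (grid s) i - f (grid r) i\<bar> + \<bar>grid s i - grid r i\<bar>"
      using label_change \<open>grid r \<in> cube n\<close> \<open>grid s \<in> cube n\<close> \<open>i < n\<close>
        \<open>label (grid r) i \<noteq> label (grid s) i\<close> by blast
    moreover have "\<bar>grid s i - grid r i\<bar> \<le> c" "\<bar>grid r i - grid q i\<bar> \<le> c"
      using near[OF s r, of i] near[OF r q_self, of i] by auto
    ultimately show ?thesis unfolding c_def by linarith
  qed
  ultimately show thesis by (rule that)
qed

lemma brouwer_cube: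
  fixes f :: "(nat \<Rightarrow> real) \<Rightarrow> nat \<Rightarrow> real"
  assumes cont: "continuous_on (cube n) f" and maps: "f \<in> cube n \<rightarrow> cube n"
  shows "\<exists>x\<in>cube n. f x = x"
proof (rule ccontr)
  assume nofix: "\<not> ?thesis"
  define dev where "dev x = (\<Sum>i<n. \<bar>f x i - x i\<bar>)" for x
  have "continuous_on (cube n) (\<lambda>x. f x i)" for i
    using cont by (rule continuous_on_product_then_coordinatewise)
  then have dev_cont: "continuous_on (cube n) dev"
    unfolding dev_def by (intro continuous_intros)
  have "\<not> (\<exists>x\<in>cube n. dev x = 0)"
  proof
    assume "\<exists>x\<in>cube n. dev x = 0"
    then obtain x where x: "x \<in> cube n" and "dev x = 0" by blast
    then have "f x i = x i" if "i < n" for i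
      using that unfolding dev_def by (subst (asm) sum_nonneg_eq_0_iff) auto
    moreover have "f x i = x i" if "n \<le> i" for i
      using x maps that by (auto simp: cube_def)
    ultimately have "f x = x" by (meson ext not_less)
    then show False using nofix x by blast
  qed
  then obtain \<delta> where "\<delta> > 0" and "\<forall>x\<in>cube n. \<delta> \<le> norm (dev x)"
    by (rule brouwer_compactness_lemma[OF compact_cube dev_cont])
  then have \<delta>: "\<delta> \<le> dev x" if "x \<in> cube n" for x
    using that by (simp add: dev_def)
  have "n > 0"
  proof (rule ccontr)
    assume "\<not> n > 0"
    moreover have "(\<lambda>_. 0) \<in> cube n" by (simp add: cube_def)
    ultimately show False using \<delta>[of "\<lambda>_. 0"] \<open>\<delta> > 0\<close> by (simp add: dev_def)
  qed
  with \<open>\<delta> > 0\<close> obtain z where "z \<in> cube n" and "\<And>i. i < n \<Longrightarrow> \<bar>f z i - z i\<bar> < \<delta> / real n"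
    using cube_approximate_fixpoint[OF cont maps, of "\<delta> / real n"] by auto
  then have "dev z < (\<Sum>i<n. \<delta> / real n)"
    unfolding dev_def using \<open>n > 0\<close> by (intro sum_strict_mono) auto
  then show False using \<delta>[OF \<open>z \<in> cube n\<close>] \<open>n > 0\<close> by simp
qed

section \<open>Flow polytopes\<close>

definition flow_polytope :: "'i set \<Rightarrow> ('i \<Rightarrow> 'p set) \<Rightarrow> ('i \<Rightarrow> real) \<Rightarrow> ('i \<times> 'p \<Rightarrow> real) set" where
  "flow_polytope I P d = {x. (\<forall>q\<in>Sigma I P. 0 \<le> x q) \<and> (\<forall>q. q \<notin> Sigma I P \<longrightarrow> x q = 0) \<and>
     (\<forall>i\<in>I. (\<Sum>p\<in>P i. x (i, p)) = d i)}"

lemma flow_polytopeD: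
  assumes "x \<in> flow_polytope I P d"
  shows "\<And>i p. i \<in> I \<Longrightarrow> p \<in> P i \<Longrightarrow> 0 \<le> x (i, p)"
    and "\<And>q. q \<notin> Sigma I P \<Longrightarrow> x q = 0"
    and "\<And>i. i \<in> I \<Longrightarrow> (\<Sum>p\<in>P i. x (i, p)) = d i"
  using assms by (auto simp: flow_polytope_def)

lemma flow_polytopeI:
  assumes "\<And>i p. i \<in> I \<Longrightarrow> p \<in> P i \<Longrightarrow> 0 \<le> x (i, p)"
    and "\<And>q. q \<notin> Sigma I P \<Longrightarrow> x q = 0"
    and "\<And>i. i \<in> I \<Longrightarrow> (\<Sum>p\<in>P i. x (i, p)) = d i"
  shows "x \<in> flow_polytope I P d"
  using assms by (auto simp: flow_polytope_def)

lemma flow_polytope_le_demand: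
  assumes "x \<in> flow_polytope I P d" "i \<in> I" "p \<in> P i" "finite (P i)"
  shows "x (i, p) \<le> d i"
proof -
  have "x (i, p) \<le> (\<Sum>p'\<in>P i. x (i, p'))"
    using assms flow_polytopeD(1)[OF assms(1)] by (intro member_le_sum) auto
  then show ?thesis using flow_polytopeD(3)[OF assms(1,2)] by simp
qed

lemma flow_polytope_empty:
  assumes "i \<in> I" "P i = {}" "d i > 0"
  shows "flow_polytope I P d = {}"
  using assms flow_polytopeD(3)[of _ I P d i] by force

definition flow_to_cube :: "(nat \<Rightarrow> 'i \<times> 'p) \<Rightarrow> nat \<Rightarrow> ('i \<Rightarrow> real) \<Rightarrow> ('i \<times> 'p \<Rightarrow> real) \<Rightarrow> nat \<Rightarrow> real"
  where "flow_to_cube e N d x = (\<lambda>k. if k < N then x (e k) / d (fst (e k)) else 0)"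

definition cube_deficit :: "('i \<Rightarrow> 'p set) \<Rightarrow> ('i \<times> 'p \<Rightarrow> nat) \<Rightarrow> (nat \<Rightarrow> real) \<Rightarrow> 'i \<Rightarrow> real"
  where "cube_deficit P idx y i = max 0 (1 - (\<Sum>p\<in>P i. \<bar>y (idx (i, p))\<bar>))"

text \<open>Padding every route by the deficit keeps the denominator at least \<open>1\<close>; on images of
  flows the deficit vanishes, which makes \<open>cube_to_flow\<close> a left inverse of \<open>flow_to_cube\<close>.\<close>

definition cube_to_flow ::
  "'i set \<Rightarrow> ('i \<Rightarrow> 'p set) \<Rightarrow> ('i \<Rightarrow> real) \<Rightarrow> ('i \<times> 'p \<Rightarrow> nat) \<Rightarrow> (nat \<Rightarrow> real) \<Rightarrow> 'i \<times> 'p \<Rightarrow> real"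
  where "cube_to_flow I P d idx y = (\<lambda>(i, p). if i \<in> I \<and> p \<in> P i then
      d i * (\<bar>y (idx (i, p))\<bar> + cube_deficit P idx y i) / (\<Sum>q\<in>P i. \<bar>y (idx (i, q))\<bar> + cube_deficit P idx y i)
    else 0)"

lemma cube_to_flow_apply:
  assumes "i \<in> I" "p \<in> P i"
  shows "cube_to_flow I P d idx y (i, p) = d i * (\<bar>y (idx (i, p))\<bar> + cube_deficit P idx y i) /
    (\<Sum>q\<in>P i. \<bar>y (idx (i, q))\<bar> + cube_deficit P idx y i)"
  using assms by (simp add: cube_to_flow_def)

lemma continuous_on_flow_to_cube: "continuous_on S (flow_to_cube e N d)"
proof (rule continuous_on_coordinatewise_then_product)
  fix k
  have "continuous_on S (\<lambda>x. x (e k) * inverse (d (fst (e k))))"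
    by (intro continuous_intros)
  then show "continuous_on S (\<lambda>x. flow_to_cube e N d x k)"
    by (cases "k < N") (simp_all add: flow_to_cube_def divide_inverse)
qed

lemma flow_to_cube_in_cube:
  assumes "e ` {..<N} \<subseteq> Sigma I P" "x \<in> flow_polytope I P d"
    and "\<And>i. i \<in> I \<Longrightarrow> finite (P i)" "\<And>i. i \<in> I \<Longrightarrow> d i > 0"
  shows "flow_to_cube e N d x \<in> cube N"
proof (rule cube_memI)
  fix k assume "k < N"
  then obtain i p where "e k = (i, p)" "i \<in> I" "p \<in> P i" using assms(1) by blast
  moreover have "0 \<le> x (i, p)" "x (i, p) \<le> d i" "d i > 0"
    using \<open>i \<in> I\<close> \<open>p \<in> P i\<close> assms flow_polytopeD(1)[OF assms(2)] flow_polytope_le_demand[OF assms(2)] by auto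
  ultimately show "0 \<le> flow_to_cube e N d x k \<and> flow_to_cube e N d x k \<le> 1"
    using \<open>k < N\<close> by (simp add: flow_to_cube_def)
qed (simp add: flow_to_cube_def)

lemma cube_to_flow_denominator_ge_1:
  assumes "finite (P i)" "P i \<noteq> {}"
  shows "1 \<le> (\<Sum>q\<in>P i. \<bar>y (idx (i, q))\<bar> + cube_deficit P idx y i)"
proof -
  let ?w = "\<Sum>q\<in>P i. \<bar>y (idx (i, q))\<bar>"
  have "1 \<le> real (card (P i))" using assms by (simp add: Suc_le_eq card_gt_0_iff)
  then have "1 * cube_deficit P idx y i \<le> real (card (P i)) * cube_deficit P idx y i"
    by (intro mult_right_mono) (simp_all add: cube_deficit_def)
  moreover have "1 - ?w \<le> cube_deficit P idx y i" by (simp add: cube_deficit_def)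
  ultimately show ?thesis by (simp add: sum.distrib)
qed

lemma continuous_on_cube_to_flow:
  assumes "\<And>i. i \<in> I \<Longrightarrow> finite (P i)" "\<And>i. i \<in> I \<Longrightarrow> P i \<noteq> {}"
  shows "continuous_on S (cube_to_flow I P d idx)"
proof (rule continuous_on_coordinatewise_then_product)
  fix q :: "'a \<times> 'b"
  obtain i p where q: "q = (i, p)" by fastforce
  show "continuous_on S (\<lambda>y. cube_to_flow I P d idx y q)"
  proof (cases "i \<in> I \<and> p \<in> P i")
    case True
    have "continuous_on S (\<lambda>y. d i * (\<bar>y (idx (i, p))\<bar> + cube_deficit P idx y i) /
        (\<Sum>q\<in>P i. \<bar>y (idx (i, q))\<bar> + cube_deficit P idx y i))"
      unfolding cube_deficit_def
    proof (intro continuous_intros ballI)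
      fix y :: "nat \<Rightarrow> real"
      show "(\<Sum>q\<in>P i. \<bar>y (idx (i, q))\<bar> + max 0 (1 - (\<Sum>p\<in>P i. \<bar>y (idx (i, p))\<bar>))) \<noteq> 0"
        using cube_to_flow_denominator_ge_1[of P i y idx] assms True
        unfolding cube_deficit_def by fastforce
    qed
    then show ?thesis using True by (simp add: q cube_to_flow_def)
  next
    case False
    then have "cube_to_flow I P d idx y q = 0" for y by (auto simp: q cube_to_flow_def)
    then show ?thesis by simp
  qed
qed

lemma cube_to_flow_in_flow_polytope:
  assumes "\<And>i. i \<in> I \<Longrightarrow> finite (P i)" "\<And>i. i \<in> I \<Longrightarrow> P i \<noteq> {}"
    and "\<And>i. i \<in> I \<Longrightarrow> d i > 0"
  shows "cube_to_flow I P d idx y \<in> flow_polytope I P d"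
proof (rule flow_polytopeI)
  fix i p assume i: "i \<in> I" and p: "p \<in> P i"
  have "1 \<le> (\<Sum>q\<in>P i. \<bar>y (idx (i, q))\<bar> + cube_deficit P idx y i)"
    using assms i by (intro cube_to_flow_denominator_ge_1)
  moreover have "0 \<le> cube_deficit P idx y i" by (simp add: cube_deficit_def)
  ultimately show "0 \<le> cube_to_flow I P d idx y (i, p)"
    unfolding cube_to_flow_apply[of i I p P, OF i p] using assms(3)[OF i]
    by (intro divide_nonneg_nonneg mult_nonneg_nonneg add_nonneg_nonneg) simp_all
next
  fix i assume i: "i \<in> I"
  let ?den = "\<Sum>q\<in>P i. \<bar>y (idx (i, q))\<bar> + cube_deficit P idx y i"
  have "(\<Sum>p\<in>P i. cube_to_flow I P d idx y (i, p)) =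
      (\<Sum>p\<in>P i. d i * (\<bar>y (idx (i, p))\<bar> + cube_deficit P idx y i) / ?den)"
    using i by (simp add: cube_to_flow_apply)
  also have "\<dots> = d i * ?den / ?den"
    by (simp only: sum_divide_distrib[symmetric] sum_distrib_left[symmetric])
  also have "\<dots> = d i"
    using cube_to_flow_denominator_ge_1[of P i y idx] assms i by simp
  finally show "(\<Sum>p\<in>P i. cube_to_flow I P d idx y (i, p)) = d i" .
next
  fix q assume "q \<notin> Sigma I P"
  then show "cube_to_flow I P d idx y q = 0" by (cases q) (auto simp: cube_to_flow_def)
qed

lemma cube_to_flow_flow_to_cube:
  assumes e: "bij_betw e {..<N} (Sigma I P)" and x: "x \<in> flow_polytope I P d"
    and "\<And>i. i \<in> I \<Longrightarrow> d i > 0"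
  shows "cube_to_flow I P d (inv_into {..<N} e) (flow_to_cube e N d x) = x"
proof
  fix q :: "'a \<times> 'b"
  obtain i p where q: "q = (i, p)" by fastforce
  let ?y = "flow_to_cube e N d x"
  have coord: "?y (inv_into {..<N} e (i, p')) = x (i, p') / d i" if "i \<in> I" "p' \<in> P i" for p'
  proof -
    have "(i, p') \<in> e ` {..<N}" using that e by (simp add: bij_betw_def)
    then show ?thesis
      using inv_into_into[of "(i, p')" e "{..<N}"] by (simp add: flow_to_cube_def f_inv_into_f)
  qed
  show "cube_to_flow I P d (inv_into {..<N} e) ?y q = x q"
  proof (cases "i \<in> I \<and> p \<in> P i")
    case True
    then have "d i > 0" using assms by blast
    have abs_coord: "\<bar>?y (inv_into {..<N} e (i, p'))\<bar> = x (i, p') / d i" if "p' \<in> P i" for p'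
      using True that coord flow_polytopeD(1)[OF x] \<open>d i > 0\<close> by simp
    have "(\<Sum>p'\<in>P i. \<bar>?y (inv_into {..<N} e (i, p'))\<bar>) = (\<Sum>p'\<in>P i. x (i, p') / d i)"
      using abs_coord by (rule sum.cong[OF refl])
    also have "\<dots> = 1"
      using flow_polytopeD(3)[OF x] True \<open>d i > 0\<close> by (simp add: sum_divide_distrib[symmetric])
    finally have sum_one: "(\<Sum>p'\<in>P i. \<bar>?y (inv_into {..<N} e (i, p'))\<bar>) = 1" .
    then have deficit: "cube_deficit P (inv_into {..<N} e) ?y i = 0"
      by (simp add: cube_deficit_def)
    have "cube_to_flow I P d (inv_into {..<N} e) ?y (i, p) = d i * (x (i, p) / d i) / 1"
      using True by (simp only: cube_to_flow_apply deficit add_0_right sum_one abs_coord)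
    then show ?thesis using \<open>d i > 0\<close> by (simp add: q)
  qed (use flow_polytopeD(2)[OF x] in \<open>auto simp: q cube_to_flow_def\<close>)
qed

lemma flow_polytope_cube_retraction:
  assumes "finite I" "\<And>i. i \<in> I \<Longrightarrow> finite (P i)" "\<And>i. i \<in> I \<Longrightarrow> P i \<noteq> {}"
    and "\<And>i. i \<in> I \<Longrightarrow> d i > 0"
  obtains N enc dec where "continuous_on (flow_polytope I P d) enc" "enc \<in> flow_polytope I P d \<rightarrow> cube N"
    and "continuous_on (cube N) dec" "dec \<in> cube N \<rightarrow> flow_polytope I P d"
    and "\<And>x. x \<in> flow_polytope I P d \<Longrightarrow> dec (enc x) = x"
proof -
  define N where "N = card (Sigma I P)"
  have "finite (Sigma I P)" using assms by blast
  then obtain e where "bij_betw e {0..<N} (Sigma I P)"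
    unfolding N_def using ex_bij_betw_nat_finite by blast
  then have e: "bij_betw e {..<N} (Sigma I P)"
    by (simp add: lessThan_atLeast0)
  then have "e ` {..<N} \<subseteq> Sigma I P" by (simp add: bij_betw_def)
  show thesis
  proof (rule that)
    show "continuous_on (flow_polytope I P d) (flow_to_cube e N d)"
      by (rule continuous_on_flow_to_cube)
    show "flow_to_cube e N d \<in> flow_polytope I P d \<rightarrow> cube N"
      using flow_to_cube_in_cube[OF \<open>e ` {..<N} \<subseteq> Sigma I P\<close>] assms by blast
    show "continuous_on (cube N) (cube_to_flow I P d (inv_into {..<N} e))"
      using assms by (intro continuous_on_cube_to_flow)
    show "cube_to_flow I P d (inv_into {..<N} e) \<in> cube N \<rightarrow> flow_polytope I P d"
      using cube_to_flow_in_flow_polytope assms by blast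
    show "cube_to_flow I P d (inv_into {..<N} e) (flow_to_cube e N d x) = x" if "x \<in> flow_polytope I P d" for x
      using cube_to_flow_flow_to_cube[OF e that] assms by blast
  qed
qed

lemma flow_polytope_fixpoint:
  assumes "finite I" "\<And>i. i \<in> I \<Longrightarrow> finite (P i)" "\<And>i. i \<in> I \<Longrightarrow> P i \<noteq> {}"
    and "\<And>i. i \<in> I \<Longrightarrow> d i > 0"
    and "continuous_on (flow_polytope I P d) F" "F \<in> flow_polytope I P d \<rightarrow> flow_polytope I P d"
  obtains x where "x \<in> flow_polytope I P d" "F x = x"
proof (rule flow_polytope_cube_retraction[of I P d, OF assms(1-4)])
  fix N enc dec
  assume "continuous_on (flow_polytope I P d) enc" "enc \<in> flow_polytope I P d \<rightarrow> cube N"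
    and "continuous_on (cube N) dec" "dec \<in> cube N \<rightarrow> flow_polytope I P d"
    and "\<And>x. x \<in> flow_polytope I P d \<Longrightarrow> dec (enc x) = x"
  from invertible_fixpoint_property[OF this brouwer_cube assms(5,6)] that show thesis by blast
qed

lemma compact_flow_polytope:
  assumes "finite I" "\<And>i. i \<in> I \<Longrightarrow> finite (P i)" "\<And>i. i \<in> I \<Longrightarrow> d i > 0"
  shows "compact (flow_polytope I P d)"
proof (cases "\<forall>i\<in>I. P i \<noteq> {}")
  case True
  then have nonempty: "\<And>i. i \<in> I \<Longrightarrow> P i \<noteq> {}" by blast
  show ?thesis
  proof (rule flow_polytope_cube_retraction[of I P d, OF assms(1,2) nonempty assms(3)])
    fix N enc dec
    assume "enc \<in> flow_polytope I P d \<rightarrow> cube N"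
      and "continuous_on (cube N) dec" "dec \<in> cube N \<rightarrow> flow_polytope I P d"
      and "\<And>x. x \<in> flow_polytope I P d \<Longrightarrow> dec (enc x) = x"
    then have "flow_polytope I P d = dec ` cube N" by (auto intro: rev_image_eqI)
    then show ?thesis
      using compact_continuous_image[OF \<open>continuous_on (cube N) dec\<close> compact_cube] by simp
  qed
next
  case False
  then show ?thesis using flow_polytope_empty assms(3) by fastforce
qed

section \<open>Existence of Wardrop equilibria\<close>

lemma weighted_sum_witness_above_mean:
  fixes w c :: "'a \<Rightarrow> real"
  assumes "finite A" "\<And>a. a \<in> A \<Longrightarrow> 0 \<le> w a" "0 < (\<Sum>a\<in>A. w a)"
    and "(\<Sum>a\<in>A. w a * c a) = (\<Sum>a\<in>A. w a) * m"
  shows "\<exists>a\<in>A. 0 < w a \<and> m \<le> c a"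
proof (rule ccontr)
  assume "\<not> ?thesis"
  then have below: "c a < m" if "a \<in> A" "0 < w a" for a
    using that by (meson not_le)
  obtain a where "a \<in> A" "0 < w a"
    using assms(3) sum_nonpos[of A w] by (force simp: not_less)
  have "(\<Sum>a\<in>A. w a * c a) < (\<Sum>a\<in>A. w a * m)"
  proof (rule sum_strict_mono_ex1[OF assms(1)])
    show "\<forall>a\<in>A. w a * c a \<le> w a * m"
    proof
      fix a assume "a \<in> A"
      show "w a * c a \<le> w a * m"
      proof (cases "w a = 0")
        case False
        then have "0 < w a" using assms(2) \<open>a \<in> A\<close> by (simp add: less_le)
        with below \<open>a \<in> A\<close> have "c a < m" by blast
        with \<open>0 < w a\<close> show ?thesis by simp
      qed simp
    qed
    show "\<exists>a\<in>A. w a * c a < w a * m"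
      using below[OF \<open>a \<in> A\<close> \<open>0 < w a\<close>] \<open>a \<in> A\<close> \<open>0 < w a\<close> by (intro bexI[of _ a]) simp_all
  qed
  then show False using assms(4) by (simp add: sum_distrib_right)
qed

lemma weighted_sum_support_at_mean:
  fixes w c :: "'a \<Rightarrow> real"
  assumes "finite A" "\<And>a. a \<in> A \<Longrightarrow> 0 \<le> w a" "\<And>a. a \<in> A \<Longrightarrow> m \<le> c a"
    and "(\<Sum>a\<in>A. w a * c a) = (\<Sum>a\<in>A. w a) * m"
    and "a \<in> A" "0 < w a"
  shows "c a = m"
proof -
  have "(\<Sum>a\<in>A. w a * (c a - m)) = (\<Sum>a\<in>A. w a * c a) - (\<Sum>a\<in>A. w a) * m"
    by (simp add: right_diff_distrib sum_subtractf sum_distrib_right)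
  then have "(\<Sum>a\<in>A. w a * (c a - m)) = 0" using assms(4) by simp
  moreover have "\<forall>a\<in>A. 0 \<le> w a * (c a - m)" using assms(2,3) by simp
  ultimately have "w a * (c a - m) = 0"
    using assms(1,5) by (simp add: sum_nonneg_eq_0_iff)
  then show ?thesis using assms(6) by simp
qed

definition mean_cost ::
  "('i \<Rightarrow> 'p set) \<Rightarrow> ('i \<Rightarrow> real) \<Rightarrow> ('i \<Rightarrow> 'p \<Rightarrow> ('i \<times> 'p \<Rightarrow> real) \<Rightarrow> real) \<Rightarrow> ('i \<times> 'p \<Rightarrow> real) \<Rightarrow> 'i \<Rightarrow> real"
  where "mean_cost P d c x i = (\<Sum>p\<in>P i. x (i, p) * c i p x) / d i"

definition cost_advantage ::
  "('i \<Rightarrow> 'p set) \<Rightarrow> ('i \<Rightarrow> real) \<Rightarrow> ('i \<Rightarrow> 'p \<Rightarrow> ('i \<times> 'p \<Rightarrow> real) \<Rightarrow> real) \<Rightarrow> ('i \<times> 'p \<Rightarrow> real) \<Rightarrow> 'i \<Rightarrow> 'p \<Rightarrow> real"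
  where "cost_advantage P d c x i p = max 0 (mean_cost P d c x i - c i p x)"

definition wardrop_map ::
  "'i set \<Rightarrow> ('i \<Rightarrow> 'p set) \<Rightarrow> ('i \<Rightarrow> real) \<Rightarrow> ('i \<Rightarrow> 'p \<Rightarrow> ('i \<times> 'p \<Rightarrow> real) \<Rightarrow> real) \<Rightarrow>
    ('i \<times> 'p \<Rightarrow> real) \<Rightarrow> 'i \<times> 'p \<Rightarrow> real"
  where "wardrop_map I P d c x = (\<lambda>(i, p). if i \<in> I \<and> p \<in> P i then
    d i * (x (i, p) + cost_advantage P d c x i p) / (d i + (\<Sum>q\<in>P i. cost_advantage P d c x i q))
    else 0)"

lemma wardrop_map_apply:
  assumes "i \<in> I" "p \<in> P i"
  shows "wardrop_map I P d c x (i, p) =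
    d i * (x (i, p) + cost_advantage P d c x i p) / (d i + (\<Sum>q\<in>P i. cost_advantage P d c x i q))"
  using assms by (simp add: wardrop_map_def)

lemma advantage_sum_nonneg: "0 \<le> (\<Sum>q\<in>P i. cost_advantage P d c x i q)"
  by (intro sum_nonneg) (simp add: cost_advantage_def)

lemma continuous_on_wardrop_map:
  assumes "\<And>i. i \<in> I \<Longrightarrow> d i > 0" "\<And>i p. i \<in> I \<Longrightarrow> p \<in> P i \<Longrightarrow> continuous_on S (c i p)"
  shows "continuous_on S (wardrop_map I P d c)"
proof (rule continuous_on_coordinatewise_then_product)
  fix q :: "'a \<times> 'b"
  obtain i p where q: "q = (i, p)" by fastforce
  show "continuous_on S (\<lambda>x. wardrop_map I P d c x q)"
  proof (cases "i \<in> I \<and> p \<in> P i")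
    case True
    then have "d i > 0" using assms(1) by blast
    have "continuous_on S (\<lambda>x. cost_advantage P d c x i p')" if "p' \<in> P i" for p'
      unfolding cost_advantage_def mean_cost_def
      using True that assms(2) \<open>d i > 0\<close> by (intro continuous_intros) auto
    moreover have "d i + (\<Sum>q\<in>P i. cost_advantage P d c x i q) \<noteq> 0" for x
      using \<open>d i > 0\<close> advantage_sum_nonneg[of P d c x i] by linarith
    ultimately have "continuous_on S (\<lambda>x. d i * (x (i, p) + cost_advantage P d c x i p) /
        (d i + (\<Sum>q\<in>P i. cost_advantage P d c x i q)))"
      using True by (intro continuous_intros) auto
    then show ?thesis using True by (simp add: q wardrop_map_apply)
  next
    case False
    then have "wardrop_map I P d c x q = 0" for x by (auto simp: q wardrop_map_def)
    then show ?thesis by simp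
  qed
qed

lemma wardrop_map_in_flow_polytope:
  assumes "\<And>i. i \<in> I \<Longrightarrow> d i > 0" "x \<in> flow_polytope I P d"
  shows "wardrop_map I P d c x \<in> flow_polytope I P d"
proof (rule flow_polytopeI)
  fix i p assume i: "i \<in> I" and p: "p \<in> P i"
  have "0 \<le> cost_advantage P d c x i p" by (simp add: cost_advantage_def)
  then show "0 \<le> wardrop_map I P d c x (i, p)"
    unfolding wardrop_map_apply[of i I p P, OF i p]
    using assms(1)[OF i] flow_polytopeD(1)[OF assms(2) i p] advantage_sum_nonneg[of P d c x i]
    by (intro divide_nonneg_nonneg mult_nonneg_nonneg add_nonneg_nonneg) simp_all
next
  fix i assume i: "i \<in> I"
  let ?den = "d i + (\<Sum>q\<in>P i. cost_advantage P d c x i q)"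
  have "(\<Sum>p\<in>P i. wardrop_map I P d c x (i, p)) =
      (\<Sum>p\<in>P i. d i * (x (i, p) + cost_advantage P d c x i p) / ?den)"
    using i by (simp add: wardrop_map_apply)
  also have "\<dots> = d i * (\<Sum>p\<in>P i. x (i, p) + cost_advantage P d c x i p) / ?den"
    by (simp only: sum_divide_distrib[symmetric] sum_distrib_left[symmetric])
  also have "(\<Sum>p\<in>P i. x (i, p) + cost_advantage P d c x i p) = ?den"
    using flow_polytopeD(3)[OF assms(2) i] by (simp add: sum.distrib)
  also have "d i * ?den / ?den = d i"
    using assms(1)[OF i] advantage_sum_nonneg[of P d c x i] by simp
  finally show "(\<Sum>p\<in>P i. wardrop_map I P d c x (i, p)) = d i" .
next
  fix q assume "q \<notin> Sigma I P"
  then show "wardrop_map I P d c x q = 0" by (cases q) (auto simp: wardrop_map_def)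
qed

lemma wardrop_map_fixpoint_equilibrium:
  assumes "finite (P i)" "i \<in> I" "d i > 0" "x \<in> flow_polytope I P d" "wardrop_map I P d c x = x"
    and "p \<in> P i" "0 < x (i, p)" "q \<in> P i"
  shows "c i p x \<le> c i q x"
proof -
  let ?m = "mean_cost P d c x i"
  let ?adv = "cost_advantage P d c x i"
  have nonneg: "\<And>p'. p' \<in> P i \<Longrightarrow> 0 \<le> x (i, p')"
    using flow_polytopeD(1)[OF assms(4) assms(2)] .
  have total: "(\<Sum>p'\<in>P i. x (i, p')) = d i"
    using flow_polytopeD(3)[OF assms(4) assms(2)] .
  have weights: "(\<Sum>p'\<in>P i. x (i, p') * c i p' x) = (\<Sum>p'\<in>P i. x (i, p')) * ?m"
    using total \<open>d i > 0\<close> by (simp add: mean_cost_def)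
  have balance: "x (i, p') * (\<Sum>q'\<in>P i. ?adv q') = d i * ?adv p'" if "p' \<in> P i" for p'
  proof -
    have "0 < d i + (\<Sum>q'\<in>P i. ?adv q')"
      using \<open>d i > 0\<close> advantage_sum_nonneg[of P d c x i] by linarith
    moreover have "x (i, p') = d i * (x (i, p') + ?adv p') / (d i + (\<Sum>q'\<in>P i. ?adv q'))"
      using wardrop_map_apply[of i I p' P d c x] assms(2,5) that by simp
    ultimately show ?thesis by (simp add: field_simps)
  qed
  obtain p0 where "p0 \<in> P i" "0 < x (i, p0)" "?m \<le> c i p0 x"
    using weighted_sum_witness_above_mean[OF assms(1) nonneg _ weights] total \<open>d i > 0\<close> by auto
  then have "?adv p0 = 0" by (simp add: cost_advantage_def)
  then have "(\<Sum>q'\<in>P i. ?adv q') = 0"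
    using balance[OF \<open>p0 \<in> P i\<close>] \<open>0 < x (i, p0)\<close> by simp
  then have no_advantage: "?adv q' = 0" if "q' \<in> P i" for q'
    using assms(1) that by (simp add: sum_nonneg_eq_0_iff cost_advantage_def)
  have above: "?m \<le> c i q' x" if "q' \<in> P i" for q'
    using no_advantage[OF that] by (simp add: cost_advantage_def max_def split: if_splits)
  have "c i p x = ?m"
    using weighted_sum_support_at_mean[OF assms(1) nonneg above weights assms(6,7)] .
  then show ?thesis using above[OF assms(8)] by simp
qed

lemma wardrop_equilibrium_exists:
  fixes c :: "'i \<Rightarrow> 'p \<Rightarrow> ('i \<times> 'p \<Rightarrow> real) \<Rightarrow> real"
  assumes "finite I" "\<And>i. i \<in> I \<Longrightarrow> finite (P i)" "\<And>i. i \<in> I \<Longrightarrow> P i \<noteq> {}"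
    and "\<And>i. i \<in> I \<Longrightarrow> d i > 0"
    and "\<And>i p. i \<in> I \<Longrightarrow> p \<in> P i \<Longrightarrow> continuous_on (flow_polytope I P d) (c i p)"
  obtains x where "x \<in> flow_polytope I P d"
    and "\<And>i p q. i \<in> I \<Longrightarrow> p \<in> P i \<Longrightarrow> 0 < x (i, p) \<Longrightarrow> q \<in> P i \<Longrightarrow> c i p x \<le> c i q x"
proof (rule flow_polytope_fixpoint[of I P d "wardrop_map I P d c", OF assms(1-4)])
  show "continuous_on (flow_polytope I P d) (wardrop_map I P d c)"
    using assms(4,5) by (rule continuous_on_wardrop_map)
  show "wardrop_map I P d c \<in> flow_polytope I P d \<rightarrow> flow_polytope I P d"
    using assms(4) wardrop_map_in_flow_polytope by blast
  fix x assume "x \<in> flow_polytope I P d" "wardrop_map I P d c x = x"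
  with assms(2,4) show thesis
    by (intro that) (auto intro: wardrop_map_fixpoint_equilibrium)
qed

section \<open>Tolls enforcing minimal externality\<close>

lemma finite_paths:
  assumes "finite V" "E \<subseteq> V \<times> V" "t \<in> V"
  shows "finite (paths E s t)"
proof (rule finite_subset[OF _ finite_subset_distinct[OF assms(1)]])
  show "paths E s t \<subseteq> {xs. set xs \<subseteq> V \<and> distinct xs}"
  proof
    fix p assume "p \<in> paths E s t"
    then have p: "p \<noteq> []" "last p = t" "distinct p" "\<forall>k. Suc k < length p \<longrightarrow> (p ! k, p ! Suc k) \<in> E"
      unfolding paths_def simple_path_def by auto
    have "p ! k \<in> V" if "k < length p" for k
    proof (cases "Suc k < length p")
      case True
      then show ?thesis using p(4) assms(2) by blast
    next
      case False
      then have "k = length p - 1" using that by simp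
      then have "p ! k = last p" using p(1) by (simp add: last_conv_nth)
      then show ?thesis using p(2) assms(3) by simp
    qed
    then show "p \<in> {xs. set xs \<subseteq> V \<and> distinct xs}" using p(3) by (auto simp: in_set_conv_nth)
  qed
qed

lemma finite_imp_strict_upper_bound:
  fixes f :: "'a \<Rightarrow> real"
  assumes "finite A"
  shows "\<exists>b>0. \<forall>a\<in>A. f a < b"
proof (intro exI conjI ballI)
  show "0 < 1 + (\<Sum>a\<in>A. \<bar>f a\<bar>)" by (simp add: sum_nonneg add_pos_nonneg)
  fix a assume "a \<in> A"
  then have "\<bar>f a\<bar> \<le> (\<Sum>a\<in>A. \<bar>f a\<bar>)" using assms by (intro member_le_sum) auto
  then show "f a < 1 + (\<Sum>a\<in>A. \<bar>f a\<bar>)" by linarith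
qed

locale routing_game =
  fixes E :: "('v \<times> 'v) set" and I :: "'i set" and s t :: "'i \<Rightarrow> 'v" and d :: "'i \<Rightarrow> real"
    and tau :: "'i \<Rightarrow> 'v list \<Rightarrow> ('i \<times> 'v list \<Rightarrow> real) \<Rightarrow> real"
    and g :: "'i \<Rightarrow> 'v list \<Rightarrow> real"
  assumes finite_commodities: "finite I"
    and finite_routes: "i \<in> I \<Longrightarrow> finite (paths E (s i) (t i))"
    and demand_pos: "i \<in> I \<Longrightarrow> 0 < d i"
    and continuous_travel_time:
      "i \<in> I \<Longrightarrow> p \<in> paths E (s i) (t i) \<Longrightarrow> continuous_on (feasible_flows E I s t d) (tau i p)"
begin

abbreviation routes :: "'i \<Rightarrow> 'v list set" where
  "routes i \<equiv> paths E (s i) (t i)"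

abbreviation feasible :: "('i \<times> 'v list \<Rightarrow> real) set" where
  "feasible \<equiv> feasible_flows E I s t d"

lemma feasible_eq_flow_polytope: "feasible = flow_polytope I routes d"
  unfolding feasible_flows_def flow_polytope_def allpaths_def by auto

lemma compact_feasible: "compact feasible"
  unfolding feasible_eq_flow_polytope
  using finite_commodities finite_routes demand_pos by (rule compact_flow_polytope)

lemma routes_nonempty:
  assumes "x \<in> feasible" "i \<in> I"
  shows "routes i \<noteq> {}"
  using assms flow_polytope_empty[of i I routes d] demand_pos by (auto simp: feasible_eq_flow_polytope)

lemma total_ext_eq_sum: "total_ext E I s t g x = (\<Sum>i\<in>I. \<Sum>p\<in>routes i. g i p * x (i, p))"
proof -
  have "allpaths E I s t = Sigma I routes" by (auto simp: allpaths_def)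
  then show ?thesis
    unfolding total_ext_def using finite_commodities finite_routes by (simp add: sum.Sigma)
qed

lemma g_star_le:
  assumes "i \<in> I" "p \<in> routes i"
  shows "g_star E s t g i \<le> g i p"
  unfolding g_star_def using assms finite_routes by (intro Min_le) auto

lemma g_star_attained:
  assumes "i \<in> I" "routes i \<noteq> {}"
  obtains q where "q \<in> routes i" "g i q = g_star E s t g i"
proof -
  have "g_star E s t g i \<in> g i ` routes i"
    unfolding g_star_def using assms finite_routes by (intro Min_in) auto
  then show thesis using that by auto
qed

lemma g_circ_between:
  assumes "i \<in> I" "p \<in> routes i" "g_star E s t g i < g i p"
  shows "g_star E s t g i < g_circ E s t g i" "g_circ E s t g i \<le> g i p"
proof -
  let ?G = "{g i p | p. p \<in> routes i \<and> g i p > g_star E s t g i}"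
  have "finite ?G" using finite_routes[OF assms(1)] by simp
  moreover have "g i p \<in> ?G" using assms by auto
  ultimately have g_circ: "g_circ E s t g i = Min ?G"
    unfolding g_circ_def by (intro cInf_eq_Min) auto
  have "Min ?G \<in> ?G" using \<open>finite ?G\<close> \<open>g i p \<in> ?G\<close> by (intro Min_in) auto
  then show "g_star E s t g i < g_circ E s t g i" unfolding g_circ by auto
  show "g_circ E s t g i \<le> g i p" unfolding g_circ using \<open>finite ?G\<close> \<open>g i p \<in> ?G\<close> by (rule Min_le)
qed

lemma travel_time_bounds:
  assumes "i \<in> I" "p \<in> routes i" "x \<in> feasible"
  shows "tau_inf E I s t d tau i \<le> tau i p x" "tau i p x \<le> tau_sup E I s t d tau i"
proof -
  let ?T = "{tau i p x | p x. p \<in> routes i \<and> x \<in> feasible}"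
  have "?T = (\<Union>p\<in>routes i. tau i p ` feasible)" by auto
  also have "compact \<dots>"
    using finite_routes[OF \<open>i \<in> I\<close>]
      compact_continuous_image[OF continuous_travel_time[OF \<open>i \<in> I\<close>] compact_feasible] by blast
  finally have "bounded ?T" by (rule compact_imp_bounded)
  moreover have "tau i p x \<in> ?T" using assms by blast
  ultimately show "tau_inf E I s t d tau i \<le> tau i p x" "tau i p x \<le> tau_sup E I s t d tau i"
    unfolding tau_inf_def tau_sup_def
    by (auto intro!: cInf_lower cSup_upper bounded_imp_bdd_below bounded_imp_bdd_above
        simp del: Setcompr_eq_image)
qed

lemma WE_feasible: "x \<in> WE E I s t d tau g lam \<Longrightarrow> x \<in> feasible"
  by (simp add: WE_def)

lemma WE_uses_min_externality_routes:
  assumes lam: "threshold_ratio E I s t d tau g i < lam" and x: "x \<in> WE E I s t d tau g lam"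
    and i: "i \<in> I" and p: "p \<in> routes i" and used: "0 < x (i, p)"
  shows "g i p = g_star E s t g i"
proof (rule ccontr)
  let ?g_star = "g_star E s t g i" and ?g_circ = "g_circ E s t g i"
  let ?spread = "tau_sup E I s t d tau i - tau_inf E I s t d tau i"
  assume "g i p \<noteq> ?g_star"
  then have "?g_star < g i p" using g_star_le[OF i p] by simp
  then have g_circ: "?g_star < ?g_circ" "?g_circ \<le> g i p" using g_circ_between[OF i p] by auto
  obtain q where q: "q \<in> routes i" "g i q = ?g_star"
    using g_star_attained[OF i routes_nonempty[OF WE_feasible[OF x] i]] by blast
  have "\<not> (\<forall>p\<in>routes i. g i p = ?g_star)" using p \<open>g i p \<noteq> ?g_star\<close> by blast
  then have "threshold_ratio E I s t d tau g i = ?spread / (?g_circ - ?g_star)"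
    unfolding threshold_ratio_def by (simp only: if_not_P if_False)
  with lam g_circ(1) have spread: "?spread < lam * (?g_circ - ?g_star)"
    by (simp add: pos_divide_less_eq)
  have "tau_inf E I s t d tau i \<le> tau i p x" "tau i p x \<le> tau_sup E I s t d tau i"
    "tau i q x \<le> tau_sup E I s t d tau i"
    using travel_time_bounds[OF i _ WE_feasible[OF x]] p q(1) by auto
  with spread have "0 < lam * (?g_circ - ?g_star)" by linarith
  with g_circ(1) have "0 < lam" by (simp add: zero_less_mult_iff)
  have "tau i p x + lam * g i p \<le> tau i q x + lam * g i q"
    using x i p used q(1) unfolding WE_def by blast
  with q(2) have "lam * (g i p - ?g_star) \<le> tau i q x - tau i p x"
    by (simp add: algebra_simps)
  moreover have "lam * (?g_circ - ?g_star) \<le> lam * (g i p - ?g_star)"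
    using \<open>0 < lam\<close> g_circ(2) by simp
  ultimately show False
    using spread \<open>tau_inf E I s t d tau i \<le> tau i p x\<close> \<open>tau i q x \<le> tau_sup E I s t d tau i\<close> by linarith
qed

lemma total_ext_lower_bound:
  assumes "y \<in> feasible"
  shows "(\<Sum>i\<in>I. d i * g_star E s t g i) \<le> total_ext E I s t g y"
  unfolding total_ext_eq_sum
proof (rule sum_mono)
  fix i assume i: "i \<in> I"
  have "d i * g_star E s t g i = g_star E s t g i * (\<Sum>p\<in>routes i. y (i, p))"
    using flow_polytopeD(3)[of y I routes d i] assms i by (simp add: feasible_eq_flow_polytope)
  also have "\<dots> = (\<Sum>p\<in>routes i. g_star E s t g i * y (i, p))"
    by (simp add: sum_distrib_left)
  also have "\<dots> \<le> (\<Sum>p\<in>routes i. g i p * y (i, p))"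
    using flow_polytopeD(1)[of y I routes d i] assms i g_star_le[OF i]
    by (intro sum_mono mult_right_mono) (auto simp: feasible_eq_flow_polytope)
  finally show "d i * g_star E s t g i \<le> (\<Sum>p\<in>routes i. g i p * y (i, p))" .
qed

lemma total_ext_of_min_externality_routing:
  assumes "x \<in> feasible"
    and "\<And>i p. i \<in> I \<Longrightarrow> p \<in> routes i \<Longrightarrow> 0 < x (i, p) \<Longrightarrow> g i p = g_star E s t g i"
  shows "total_ext E I s t g x = (\<Sum>i\<in>I. d i * g_star E s t g i)"
  unfolding total_ext_eq_sum
proof (rule sum.cong[OF refl])
  fix i assume i: "i \<in> I"
  have x: "x \<in> flow_polytope I routes d" using assms(1) by (simp add: feasible_eq_flow_polytope)
  have "g i p * x (i, p) = g_star E s t g i * x (i, p)" if "p \<in> routes i" for p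
    using assms(2)[OF i that] flow_polytopeD(1)[OF x i that] by (cases "x (i, p) = 0") auto
  then have "(\<Sum>p\<in>routes i. g i p * x (i, p)) = (\<Sum>p\<in>routes i. g_star E s t g i * x (i, p))"
    by (rule sum.cong[OF refl])
  also have "\<dots> = g_star E s t g i * (\<Sum>p\<in>routes i. x (i, p))"
    by (simp add: sum_distrib_left)
  also have "\<dots> = d i * g_star E s t g i"
    using flow_polytopeD(3)[OF x i] by simp
  finally show "(\<Sum>p\<in>routes i. g i p * x (i, p)) = d i * g_star E s t g i" .
qed

lemma WE_total_ext_minimal:
  assumes "\<forall>i\<in>I. threshold_ratio E I s t d tau g i < lam" "x \<in> WE E I s t d tau g lam"
  shows "total_ext E I s t g x = (\<Sum>i\<in>I. d i * g_star E s t g i)"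
  using assms WE_feasible WE_uses_min_externality_routes
  by (intro total_ext_of_min_externality_routing) auto

lemma WE_total_ext_eq_INF:
  assumes "\<forall>i\<in>I. threshold_ratio E I s t d tau g i < lam" "x \<in> WE E I s t d tau g lam"
  shows "total_ext E I s t g x = (INF y\<in>feasible. total_ext E I s t g y)"
proof -
  have "\<And>y. y \<in> feasible \<Longrightarrow> total_ext E I s t g x \<le> total_ext E I s t g y"
    using WE_total_ext_minimal[OF assms] total_ext_lower_bound by simp
  then show ?thesis
    using WE_feasible[OF assms(2)] by (intro cInf_eq_minimum[symmetric]) auto
qed

lemma WE_nonempty:
  assumes "feasible \<noteq> {}"
  shows "WE E I s t d tau g lam \<noteq> {}"
proof -
  have "routes i \<noteq> {}" if "i \<in> I" for i
    using assms routes_nonempty that by blast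
  moreover have "continuous_on (flow_polytope I routes d) (\<lambda>x. tau i p x + lam * g i p)"
    if "i \<in> I" "p \<in> routes i" for i p
    using continuous_travel_time[OF that] by (simp add: feasible_eq_flow_polytope continuous_on_add)
  ultimately obtain x where "x \<in> flow_polytope I routes d"
    and "\<And>i p q. i \<in> I \<Longrightarrow> p \<in> routes i \<Longrightarrow> 0 < x (i, p) \<Longrightarrow> q \<in> routes i \<Longrightarrow>
      tau i p x + lam * g i p \<le> tau i q x + lam * g i q"
    using wardrop_equilibrium_exists[of I routes d "\<lambda>i p x. tau i p x + lam * g i p"]
      finite_commodities finite_routes demand_pos by blast
  then have "x \<in> WE E I s t d tau g lam"
    by (simp add: WE_def feasible_eq_flow_polytope)
  then show ?thesis by blast
qed

lemma feasible_budget_strictly_implementable: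
  assumes "feasible_budget E I s t d g B"
  shows "strictly_implementable E I s t d tau g B"
proof -
  obtain x0 where "x0 \<in> feasible" "total_ext E I s t g x0 \<le> B"
    using assms by (auto simp: feasible_budget_def)
  obtain lam where "lam > 0" and lam: "\<forall>i\<in>I. threshold_ratio E I s t d tau g i < lam"
    using finite_imp_strict_upper_bound[where f = "threshold_ratio E I s t d tau g", OF finite_commodities]
    by blast
  have "total_ext E I s t g u \<le> B" if "u \<in> WE E I s t d tau g lam" for u
    using WE_total_ext_minimal[OF lam that] total_ext_lower_bound[OF \<open>x0 \<in> feasible\<close>]
      \<open>total_ext E I s t g x0 \<le> B\<close> by linarith
  moreover have "WE E I s t d tau g lam \<noteq> {}"
    using \<open>x0 \<in> feasible\<close> by (intro WE_nonempty) blast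
  ultimately show ?thesis
    using \<open>lam > 0\<close> unfolding strictly_implementable_def by blast
qed

end

theorem corollary3p5:
  fixes V :: "'v set" and E :: "('v \<times> 'v) set" and I :: "'i set"
    and s t :: "'i \<Rightarrow> 'v" and d :: "'i \<Rightarrow> real"
    and tau :: "'i \<Rightarrow> 'v list \<Rightarrow> ('i \<times> 'v list \<Rightarrow> real) \<Rightarrow> real"
    and g :: "'i \<Rightarrow> 'v list \<Rightarrow> real"
  assumes "finite V" and "E \<subseteq> V \<times> V" and "finite I"
    and "\<forall>i \<in> I. s i \<in> V \<and> t i \<in> V"
    and "\<forall>i \<in> I. d i > 0"
    and "\<forall>(i, p) \<in> allpaths E I s t. g i p \<ge> 0"
    and "\<forall>(i, p) \<in> allpaths E I s t. continuous_on (feasible_flows E I s t d) (tau i p)"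
  shows "(\<forall>B. feasible_budget E I s t d g B \<longrightarrow> strictly_implementable E I s t d tau g B)
    \<and> (\<forall>lam. (\<forall>i \<in> I. threshold_ratio E I s t d tau g i < lam) \<longrightarrow>
         (\<forall>x \<in> WE E I s t d tau g lam.
            total_ext E I s t g x = (INF y \<in> feasible_flows E I s t d. total_ext E I s t g y)))"
proof -
  interpret routing_game E I s t d tau g
  proof
    show "finite I" by fact
    show "finite (paths E (s i) (t i))" if "i \<in> I" for i
      using assms(4) that by (intro finite_paths[OF assms(1,2)]) simp
    show "0 < d i" if "i \<in> I" for i
      using assms(5) that by blast
    show "continuous_on (feasible_flows E I s t d) (tau i p)" if "i \<in> I" "p \<in> paths E (s i) (t i)" for i p
      using assms(7) that by (auto simp: allpaths_def)
  qed
  show ?thesis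
    using feasible_budget_strictly_implementable WE_total_ext_eq_INF by blast
qed

end
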